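(* Let $\omega\in\mathbb{R}$, let $f$ and $f_0=f'$ be as in the context, and let $T\in(1,t_m]$. Let $\rho>0$ and $v^i$ be $C^1$ on $[1,T)\times(\mathbb{R}^3\setminus\{0\})$ and solve $\partial_t\rho+\partial_i(\rho v^i)=0$ with $\rho|_{t=1}=\frac{\iota^3}{6\pi}(1+\beta\mathcal d(|\mathbf x|))$, and let $s\in C^1$ solve $$\partial_ts+v^i\partial_is=-\Big(\frac23+\omega\Big)\partial_i\check v^i+\frac{2\check v^ix_i}{|\mathbf x|^2},\qquad s|_{t=1}=\ln\Big(\frac{(1+\beta\mathcal d(|\mathbf x|))^{2/3+\omega}}{(1+\beta)^{\omega}}|\mathbf x|^2\Big),$$ where $\check v^i:=v^i-\big(\frac{2}{3t}-\frac{f_0}{3(1+f)}\big)x^i$. Assume every point of $[1,T)\times(\mathbb{R}^3\setminus\{0\})$ lies on an integral curve of $\partial_t+v^i\partial_i$ starting on $\{t=1\}$. Then, with $\varrho:=\rho/\mathring\rho-1$ and $\mathring\rho=\frac{\iota^3}{6\pi t^2}$, $$s=\ln\Big(t^{-4/3}\frac{(1+\varrho)^{2/3+\omega}}{(1+f)^{\omega}}|\mathbf x|^2\Big),\qquad\text{and hence}\qquad p=Ke^s\rho^{4/3}=Kt^{-4/3}\frac{(1+\varrho)^{2/3+\omega}}{(1+f)^{\omega}}|\mathbf x|^2\rho^{4/3}.$$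
   Context: $f\in C^2([1,t_m))$ solves $f''+\frac{4}{3t}f'-\frac{2}{3t^2}f(1+f)-\frac{4(f')^2}{3(1+f)}=0$, $f(1)=\beta>0$, $f'(1)=3(1+\beta)\gamma$, $\gamma>0$, on its maximal interval $[1,t_m)$; $K>0$ and $\iota\in(0,1)$ are constants; $\mathcal d:(0,\infty)\to\mathbb{R}$ with $1+\beta\mathcal d>0$; $|\mathbf x|^2=\delta_{kl}x^kx^l$, $x_i=\delta_{ij}x^j$, summation convention. *)

theory Defs
  imports "HOL-Analysis.Analysis" "HOL-Library.Extended_Real"
begin

definition Ival :: "ereal \<Rightarrow> real set" where
  "Ival b = {t. 1 \<le> t \<and> ereal t < b}"

definition fsol ::
  "real \<Rightarrow> real \<Rightarrow> (real \<Rightarrow> real) \<Rightarrow> (real \<Rightarrow> real) \<Rightarrow> (real \<Rightarrow> real) \<Rightarrow> ereal \<Rightarrow> bool" where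
  "fsol \<beta> \<gamma> f f0 f2 b \<longleftrightarrow>
     1 < b \<and>
     (\<forall>t\<in>Ival b. (f has_real_derivative f0 t) (at t within Ival b)) \<and>
     (\<forall>t\<in>Ival b. (f0 has_real_derivative f2 t) (at t within Ival b)) \<and>
     continuous_on (Ival b) f2 \<and>
     (\<forall>t\<in>Ival b. 1 + f t \<noteq> 0 \<and>
        f2 t + 4 / (3 * t) * f0 t - 2 / (3 * t\<^sup>2) * f t * (1 + f t)
          - 4 * (f0 t)\<^sup>2 / (3 * (1 + f t)) = 0) \<and>
     f 1 = \<beta> \<and> f0 1 = 3 * (1 + \<beta>) * \<gamma>"

definition fsol_max ::
  "real \<Rightarrow> real \<Rightarrow> (real \<Rightarrow> real) \<Rightarrow> (real \<Rightarrow> real) \<Rightarrow> (real \<Rightarrow> real) \<Rightarrow> ereal \<Rightarrow> bool" where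
  "fsol_max \<beta> \<gamma> f f0 f2 tm \<longleftrightarrow> fsol \<beta> \<gamma> f f0 f2 tm \<and>
     (\<forall>g g0 g2 b. fsol \<beta> \<gamma> g g0 g2 b \<longrightarrow> b \<le> tm)"

definition etime :: "real \<times> (real^3)" where "etime = (1, 0)"
definition espace :: "3 \<Rightarrow> real \<times> (real^3)" where "espace i = (0, axis i 1)"

end

theory Submission
  imports Defs
begin

text \<open>Along a characteristic \<open>\<tau> \<mapsto> (\<tau>, X \<tau>)\<close> the continuity equation gives
  \<open>d/d\<tau> ln \<rho> = - div v\<close>, which cancels the divergence term of the equation for \<open>s\<close>;
  the term \<open>2 (v - c x) \<bullet> x / |x|\<^sup>2\<close> is \<open>d/d\<tau> ln |X|\<^sup>2 - 2 c\<close>, and with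
  \<open>c = 2/(3\<tau>) - f'/(3 (1 + f))\<close> all \<open>c\<close>-terms together are \<open>d/d\<tau> (2 \<omega> ln \<tau> - \<omega> ln (1 + f))\<close>.
  Hence \<open>s - (2/3 + \<omega>) ln \<rho> - 2 \<omega> ln t + \<omega> ln (1 + f) - ln |x|\<^sup>2\<close> is constant along
  characteristics. On \<open>{t = 1}\<close> it equals \<open>-(2/3 + \<omega>) ln (\<iota>\<^sup>3/(6\<pi>))\<close>, and solving for \<open>s\<close>
  gives the formula. Positivity of \<open>1 + f\<close>, needed for the logarithms, follows from
  \<open>f 1 = \<beta> > 0\<close> by the intermediate value theorem, since the ODE excludes \<open>1 + f = 0\<close>.\<close>

lemma fsol_one_plus_has_derivative:
  assumes f: "fsol \<beta> \<gamma> f f0 f2 b" and "{1..t} \<subseteq> Ival b" "\<tau> \<in> {1..t}"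
  shows "((\<lambda>u. 1 + f u) has_real_derivative f0 \<tau>) (at \<tau> within {1..t})"
proof -
  have "(f has_real_derivative f0 \<tau>) (at \<tau> within {1..t})"
    using assms by (meson DERIV_subset fsol_def subsetD)
  then show ?thesis by (auto intro!: derivative_eq_intros)
qed

lemma fsol_one_plus_pos:
  assumes f: "fsol \<beta> \<gamma> f f0 f2 b" and "\<beta> > 0" and t: "t \<in> Ival b"
  shows "1 + f t > 0"
proof (rule ccontr)
  assume "\<not> 1 + f t > 0"
  have sub: "{1..t} \<subseteq> Ival b"
    using t by (auto simp: Ival_def) (meson ereal_less_eq(3) le_less_trans)
  then have "continuous_on {1..t} (\<lambda>u. 1 + f u)"
    using fsol_one_plus_has_derivative[OF f] by (blast intro: DERIV_continuous_on)
  moreover have "1 + f 1 = 1 + \<beta>" using f by (simp add: fsol_def)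
  ultimately obtain u where "1 \<le> u" "u \<le> t" "1 + f u = 0"
    using IVT2'[of "\<lambda>u. 1 + f u" t 0 1] \<open>\<not> 1 + f t > 0\<close> \<open>\<beta> > 0\<close> t by (auto simp: Ival_def)
  then show False using f sub by (auto simp: fsol_def)
qed

lemma linear_time_space_split:
  assumes "linear L"
  shows "L (1, w) = L etime + (\<Sum>i\<in>UNIV. w $ i * L (espace i))"
proof -
  interpret linear L by fact
  have "(1, w) = etime + (\<Sum>i\<in>UNIV. w $ i *\<^sub>R espace i)"
    by (simp add: etime_def espace_def sum_3 vec_eq_iff forall_3 axis_def)
  then show ?thesis by (simp add: add sum scale)
qed

lemma has_real_derivative_along_curve:
  fixes g :: "real \<times> (real^3) \<Rightarrow> real"
  assumes g: "(g has_derivative Dg) (at (\<tau>, X \<tau>) within S)"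
    and X: "(X has_vector_derivative w) (at \<tau> within I)"
    and curve: "\<And>u. u \<in> I \<Longrightarrow> (u, X u) \<in> S"
  shows "((\<lambda>u. g (u, X u)) has_real_derivative
           Dg etime + (\<Sum>i\<in>UNIV. w $ i * Dg (espace i))) (at \<tau> within I)"
proof -
  have "((\<lambda>u. (u, X u)) has_derivative (\<lambda>h. (h, h *\<^sub>R w))) (at \<tau> within I)"
    using X by (auto intro: has_derivative_Pair has_derivative_ident simp: has_vector_derivative_def)
  moreover have "(g has_derivative Dg) (at (\<tau>, X \<tau>) within (\<lambda>u. (u, X u)) ` I)"
    using g curve by (auto intro: has_derivative_subset)
  ultimately have "((\<lambda>u. g (u, X u)) has_derivative (\<lambda>h. Dg (h, h *\<^sub>R w))) (at \<tau> within I)"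
    by (rule has_derivative_in_compose)
  moreover have "(\<lambda>h. Dg (h, h *\<^sub>R w)) = (\<lambda>h. Dg (1, w) * h)"
    using linear_cmul[OF has_derivative_linear[OF g], of _ "(1, w)"] by (simp add: mult.commute)
  ultimately show ?thesis
    by (simp add: has_field_derivative_def linear_time_space_split[OF has_derivative_linear[OF g]])
qed

lemma ln_combination_has_derivative_zero:
  fixes S R F N :: "real \<Rightarrow> real"
  assumes S: "(S has_real_derivative
                 - (2/3 + \<omega>) * (dv - 3 * c) + 2 * (wx - c * N \<tau>) / N \<tau>) (at \<tau> within I)"
    and R: "(R has_real_derivative - R \<tau> * dv) (at \<tau> within I)"
    and F: "(F has_real_derivative F') (at \<tau> within I)"
    and N: "(N has_real_derivative 2 * wx) (at \<tau> within I)"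
    and c: "c = 2 / (3 * \<tau>) - F' / (3 * F \<tau>)"
    and pos: "R \<tau> > 0" "F \<tau> > 0" "N \<tau> > 0" "\<tau> > 0"
  shows "((\<lambda>u. S u - (2/3 + \<omega>) * ln (R u) - 2 * \<omega> * ln u + \<omega> * ln (F u) - ln (N u))
           has_real_derivative 0) (at \<tau> within I)"
proof -
  have "((\<lambda>u. S u - (2/3 + \<omega>) * ln (R u) - 2 * \<omega> * ln u + \<omega> * ln (F u) - ln (N u))
          has_real_derivative
            (- (2/3 + \<omega>) * (dv - 3 * c) + 2 * (wx - c * N \<tau>) / N \<tau>)
            - (2/3 + \<omega>) * (- R \<tau> * dv / R \<tau>) - 2 * \<omega> / \<tau> + \<omega> * (F' / F \<tau>)
            - 2 * wx / N \<tau>) (at \<tau> within I)"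
    using pos by (auto intro!: derivative_eq_intros S R F N)
  moreover have "(- (2/3 + \<omega>) * (dv - 3 * c) + 2 * (wx - c * N \<tau>) / N \<tau>)
            - (2/3 + \<omega>) * (- R \<tau> * dv / R \<tau>) - 2 * \<omega> / \<tau> + \<omega> * (F' / F \<tau>)
            - 2 * wx / N \<tau> = 0"
    using pos unfolding c by (simp add: field_simps)
  ultimately show ?thesis by simp
qed

text \<open>With \<open>F = 1 + f\<close> and \<open>A = \<iota>\<^sup>3/(6\<pi>)\<close>, this is \<open>s - ln (t powr (-4/3) *
  (\<rho> / (A/t\<^sup>2)) powr (2/3 + \<omega>) / F powr \<omega> * |x|\<^sup>2) - (2/3 + \<omega>) ln A\<close>.\<close>
definition entropy_invariant ::
  "real \<Rightarrow> (real \<times> (real^3) \<Rightarrow> real) \<Rightarrow> (real \<times> (real^3) \<Rightarrow> real) \<Rightarrow> (real \<Rightarrow> real)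
     \<Rightarrow> real \<Rightarrow> real^3 \<Rightarrow> real" where
  "entropy_invariant \<omega> s \<rho> F t x =
     s (t, x) - (2/3 + \<omega>) * ln (\<rho> (t, x)) - 2 * \<omega> * ln t + \<omega> * ln (F t) - ln ((norm x)\<^sup>2)"

lemma entropy_invariant_has_derivative_zero:
  fixes \<tau> :: real and X :: "real \<Rightarrow> real^3" and v :: "real \<times> (real^3) \<Rightarrow> real^3"
    and \<rho> s :: "real \<times> (real^3) \<Rightarrow> real"
  defines "q \<equiv> (\<tau>, X \<tau>)"
  assumes X: "(X has_vector_derivative v q) (at \<tau> within I)" "X \<tau> \<noteq> 0" "\<tau> > 0"
    and curve: "\<And>u. u \<in> I \<Longrightarrow> (u, X u) \<in> S"
    and \<rho>: "(\<rho> has_derivative D\<rho>) (at q within S)" "\<rho> q > 0"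
    and s: "(s has_derivative Ds) (at q within S)"
    and F: "(F has_real_derivative F') (at \<tau> within I)" "F \<tau> > 0"
    and c: "c = 2 / (3 * \<tau>) - F' / (3 * F \<tau>)"
    and continuity: "D\<rho> etime
          + (\<Sum>i\<in>UNIV. D\<rho> (espace i) * v q $ i + \<rho> q * Dv (espace i) $ i) = 0"
    and transport: "Ds etime + (\<Sum>i\<in>UNIV. v q $ i * Ds (espace i))
          = - (2/3 + \<omega>) * (\<Sum>i\<in>UNIV. Dv (espace i) $ i - c)
            + 2 * ((v q - c *\<^sub>R X \<tau>) \<bullet> X \<tau>) / (norm (X \<tau>))\<^sup>2"
  shows "((\<lambda>u. entropy_invariant \<omega> s \<rho> F u (X u)) has_real_derivative 0) (at \<tau> within I)"
proof -
  define dv where "dv = (\<Sum>i\<in>UNIV. Dv (espace i) $ i)"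
  have "((\<lambda>u. \<rho> (u, X u)) has_real_derivative
          D\<rho> etime + (\<Sum>i\<in>UNIV. v q $ i * D\<rho> (espace i))) (at \<tau> within I)"
    using \<rho>(1) X(1) curve unfolding q_def by (rule has_real_derivative_along_curve)
  moreover have "D\<rho> etime + (\<Sum>i\<in>UNIV. v q $ i * D\<rho> (espace i)) = - \<rho> q * dv"
    using continuity by (simp add: dv_def sum.distrib sum_distrib_left mult.commute sum_negf)
  ultimately have Rd: "((\<lambda>u. \<rho> (u, X u)) has_real_derivative - \<rho> (\<tau>, X \<tau>) * dv) (at \<tau> within I)"
    by (simp add: q_def)
  have "((\<lambda>u. s (u, X u)) has_real_derivative
          Ds etime + (\<Sum>i\<in>UNIV. v q $ i * Ds (espace i))) (at \<tau> within I)"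
    using s X(1) curve unfolding q_def by (rule has_real_derivative_along_curve)
  then have Sd: "((\<lambda>u. s (u, X u)) has_real_derivative
      - (2/3 + \<omega>) * (dv - 3 * c) + 2 * (v q \<bullet> X \<tau> - c * (norm (X \<tau>))\<^sup>2) / (norm (X \<tau>))\<^sup>2)
      (at \<tau> within I)"
    using transport by (simp add: dv_def sum_subtractf inner_diff_left power2_norm_eq_inner)
  have "((\<lambda>u. X u \<bullet> X u) has_derivative (\<lambda>h. X \<tau> \<bullet> (h *\<^sub>R v q) + (h *\<^sub>R v q) \<bullet> X \<tau>))
          (at \<tau> within I)"
    using X(1) unfolding has_vector_derivative_def by (intro has_derivative_inner)
  then have Nd: "((\<lambda>u. (norm (X u))\<^sup>2) has_real_derivative 2 * (v q \<bullet> X \<tau>)) (at \<tau> within I)"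
    unfolding power2_norm_eq_inner has_field_derivative_def
    by (rule has_derivative_eq_rhs) (auto simp: inner_commute algebra_simps)
  have "0 < (norm (X \<tau>))\<^sup>2" using X(2) by simp
  with ln_combination_has_derivative_zero
      [where N = "\<lambda>u. (norm (X u))\<^sup>2" and F = F, OF Sd Rd F(1) Nd c] \<rho>(2) F(2) X(3)
  show ?thesis
    by (simp add: entropy_invariant_def q_def)
qed

lemma entropy_invariant_constant_along_characteristic:
  fixes X :: "real \<Rightarrow> real^3" and v :: "real \<times> (real^3) \<Rightarrow> real^3"
  assumes "1 \<le> t"
    and X: "\<And>\<tau>. \<tau> \<in> {1..t} \<Longrightarrow>
              X \<tau> \<noteq> 0 \<and> (X has_vector_derivative v (\<tau>, X \<tau>)) (at \<tau> within {1..t})"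
    and curve: "\<And>\<tau>. \<tau> \<in> {1..t} \<Longrightarrow> (\<tau>, X \<tau>) \<in> S"
    and \<rho>: "\<And>q. q \<in> S \<Longrightarrow> (\<rho> has_derivative D\<rho> q) (at q within S) \<and> \<rho> q > 0"
    and s: "\<And>q. q \<in> S \<Longrightarrow> (s has_derivative Ds q) (at q within S)"
    and F: "\<And>\<tau>. \<tau> \<in> {1..t} \<Longrightarrow> (F has_real_derivative F' \<tau>) (at \<tau> within {1..t}) \<and> F \<tau> > 0"
    and c: "\<And>\<tau>. c \<tau> = 2 / (3 * \<tau>) - F' \<tau> / (3 * F \<tau>)"
    and continuity: "\<And>q. q \<in> S \<Longrightarrow> D\<rho> q etime
          + (\<Sum>i\<in>UNIV. D\<rho> q (espace i) * v q $ i + \<rho> q * Dv q (espace i) $ i) = 0"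
    and transport: "\<And>q. q \<in> S \<Longrightarrow> Ds q etime + (\<Sum>i\<in>UNIV. v q $ i * Ds q (espace i))
          = - (2/3 + \<omega>) * (\<Sum>i\<in>UNIV. Dv q (espace i) $ i - c (fst q))
            + 2 * ((v q - c (fst q) *\<^sub>R snd q) \<bullet> snd q) / (norm (snd q))\<^sup>2"
  shows "entropy_invariant \<omega> s \<rho> F t (X t) = entropy_invariant \<omega> s \<rho> F 1 (X 1)"
proof -
  have "((\<lambda>u. entropy_invariant \<omega> s \<rho> F u (X u)) has_real_derivative 0) (at \<tau> within {1..t})"
    if \<tau>: "\<tau> \<in> {1..t}" for \<tau>
    using \<tau> X[OF \<tau>] curve \<rho>[OF curve[OF \<tau>]] s[OF curve[OF \<tau>]] F[OF \<tau>] c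
      continuity[OF curve[OF \<tau>]] transport[OF curve[OF \<tau>]]
    by (intro entropy_invariant_has_derivative_zero[where c = "c \<tau>" and Dv = "Dv (\<tau>, X \<tau>)"]) auto
  then obtain C where "\<forall>u\<in>{1..t}. entropy_invariant \<omega> s \<rho> F u (X u) = C"
    using has_field_derivative_zero_constant[of "{1..t}"] by (metis convex_real_interval(5))
  then show ?thesis using \<open>1 \<le> t\<close> by simp
qed

lemma ln_mult_powr_div_powr_mult:
  fixes k a b n :: real
  assumes "k > 0" "a > 0" "b > 0" "n > 0"
  shows "ln (k * a powr p / b powr q * n) = ln k + p * ln a - q * ln b + ln n"
  using assms by (simp add: ln_mult ln_div ln_powr)

lemma entropy_invariant_initial:
  assumes s: "s (1, y) = ln (a powr (2/3 + \<omega>) / F 1 powr \<omega> * (norm y)\<^sup>2)"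
    and \<rho>: "\<rho> (1, y) = A * a"
    and pos: "a > 0" "A > 0" "F 1 > 0" "y \<noteq> 0"
  shows "entropy_invariant \<omega> s \<rho> F 1 y = - (2/3 + \<omega>) * ln A"
proof -
  have "s (1, y) = (2/3 + \<omega>) * ln a - \<omega> * ln (F 1) + ln ((norm y)\<^sup>2)"
    using s ln_mult_powr_div_powr_mult[of 1 a "F 1" "(norm y)\<^sup>2"] pos by simp
  then show ?thesis
    using pos by (simp add: entropy_invariant_def \<rho> ln_mult algebra_simps)
qed

lemma ln_formula_of_entropy_invariant:
  assumes inv: "entropy_invariant \<omega> s \<rho> F t x = - (2/3 + \<omega>) * ln A"
    and pos: "t > 0" "x \<noteq> 0" "\<rho> (t, x) > 0" "F t > 0" "A > 0"
  shows "s (t, x) = ln (t powr (-4/3) * (\<rho> (t, x) / (A / t\<^sup>2)) powr (2/3 + \<omega>)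
                        / F t powr \<omega> * (norm x)\<^sup>2)"
proof -
  have "ln (t powr (-4/3) * (\<rho> (t, x) / (A / t\<^sup>2)) powr (2/3 + \<omega>) / F t powr \<omega> * (norm x)\<^sup>2)
      = -4/3 * ln t + (2/3 + \<omega>) * ln (\<rho> (t, x) / (A / t\<^sup>2)) - \<omega> * ln (F t) + ln ((norm x)\<^sup>2)"
    using pos by (subst ln_mult_powr_div_powr_mult) (simp_all add: ln_powr)
  also have "ln (\<rho> (t, x) / (A / t\<^sup>2)) = ln (\<rho> (t, x)) - ln A + 2 * ln t"
    using pos by (simp add: ln_div ln_mult ln_realpow)
  finally show ?thesis
    using inv by (simp add: entropy_invariant_def algebra_simps)
qed

theorem lemmat:
  fixes \<omega> \<beta> \<gamma> K \<iota> T :: real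
    and tm :: ereal
    and f f0 f2 :: "real \<Rightarrow> real"
    and d :: "real \<Rightarrow> real"
    and \<rho> s :: "real \<times> (real^3) \<Rightarrow> real"
    and v :: "real \<times> (real^3) \<Rightarrow> real^3"
    and D\<rho> Ds :: "real \<times> (real^3) \<Rightarrow> real \<times> (real^3) \<Rightarrow> real"
    and Dv :: "real \<times> (real^3) \<Rightarrow> real \<times> (real^3) \<Rightarrow> real^3"
  defines "Dom \<equiv> {1..<T} \<times> (UNIV - {0::real^3})"
  defines "c \<equiv> (\<lambda>t. 2 / (3 * t) - f0 t / (3 * (1 + f t)))"
  defines "vchk \<equiv> (\<lambda>(t, x). v (t, x) - c t *\<^sub>R x)"
  defines "rho0 \<equiv> (\<lambda>t. \<iota> ^ 3 / (6 * pi * t\<^sup>2))"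
  assumes hbeta: "\<beta> > 0" and hgamma: "\<gamma> > 0"
    and hf: "fsol_max \<beta> \<gamma> f f0 f2 tm"
    and hK: "K > 0" and hiota: "0 < \<iota>" "\<iota> < 1"
    and hd: "\<forall>r>0. 1 + \<beta> * d r > 0"
    and hT: "1 < T" "ereal T \<le> tm"
    and \<rho>_pos: "\<forall>q\<in>Dom. \<rho> q > 0"
    and \<rho>_C1: "\<forall>q\<in>Dom. (\<rho> has_derivative D\<rho> q) (at q within Dom)"
             "\<forall>h. continuous_on Dom (\<lambda>q. D\<rho> q h)"
    and v_C1: "\<forall>q\<in>Dom. (v has_derivative Dv q) (at q within Dom)"
             "\<forall>h. continuous_on Dom (\<lambda>q. Dv q h)"
    and s_C1: "\<forall>q\<in>Dom. (s has_derivative Ds q) (at q within Dom)"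
             "\<forall>h. continuous_on Dom (\<lambda>q. Ds q h)"
    and cont_eq: "\<forall>q\<in>Dom. D\<rho> q etime
        + (\<Sum>i\<in>UNIV. D\<rho> q (espace i) * v q $ i + \<rho> q * Dv q (espace i) $ i) = 0"
    and \<rho>_init: "\<forall>x. x \<noteq> 0 \<longrightarrow> \<rho> (1, x) = \<iota> ^ 3 / (6 * pi) * (1 + \<beta> * d (norm x))"
    and s_eq: "\<forall>q\<in>Dom. Ds q etime + (\<Sum>i\<in>UNIV. v q $ i * Ds q (espace i))
        = - (2/3 + \<omega>) * (\<Sum>i\<in>UNIV. Dv q (espace i) $ i - c (fst q))
          + 2 * (vchk q \<bullet> snd q) / (norm (snd q))\<^sup>2"
    and s_init: "\<forall>x. x \<noteq> 0 \<longrightarrow> s (1, x) =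
        ln ((1 + \<beta> * d (norm x)) powr (2/3 + \<omega>) / (1 + \<beta>) powr \<omega> * (norm x)\<^sup>2)"
    and charac: "\<forall>(t, x)\<in>Dom. \<exists>X :: real \<Rightarrow> real^3. X t = x \<and>
        (\<forall>\<tau>\<in>{1..t}. X \<tau> \<noteq> 0 \<and>
           (X has_vector_derivative v (\<tau>, X \<tau>)) (at \<tau> within {1..t}))"
  shows "\<forall>(t, x)\<in>Dom.
     s (t, x) = ln (t powr (-4/3) * (\<rho> (t, x) / rho0 t) powr (2/3 + \<omega>)
                      / (1 + f t) powr \<omega> * (norm x)\<^sup>2)
   \<and> K * exp (s (t, x)) * \<rho> (t, x) powr (4/3)
       = K * t powr (-4/3) * (\<rho> (t, x) / rho0 t) powr (2/3 + \<omega>)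
           / (1 + f t) powr \<omega> * (norm x)\<^sup>2 * \<rho> (t, x) powr (4/3)"
proof -
  have f: "fsol \<beta> \<gamma> f f0 f2 tm" using hf by (simp add: fsol_max_def)
  define A where "A = \<iota> ^ 3 / (6 * pi)"
  have A: "A > 0" "rho0 = (\<lambda>t. A / t\<^sup>2)" using hiota by (auto simp: A_def rho0_def)
  have Ival: "{1..t} \<subseteq> Ival tm" if "t < T" for t
    using that hT(2) by (auto simp: Ival_def intro: less_le_trans[of _ "ereal T"])
  have invariant: "entropy_invariant \<omega> s \<rho> (\<lambda>u. 1 + f u) t x = - (2/3 + \<omega>) * ln A"
    if tx: "(t, x) \<in> Dom" for t x
  proof -
    obtain X where X: "X t = x" "\<forall>\<tau>\<in>{1..t}. X \<tau> \<noteq> 0 \<and>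
           (X has_vector_derivative v (\<tau>, X \<tau>)) (at \<tau> within {1..t})"
      using charac tx by fast
    have t: "1 \<le> t" "t < T" using tx by (auto simp: Dom_def)
    have "entropy_invariant \<omega> s \<rho> (\<lambda>u. 1 + f u) t (X t)
        = entropy_invariant \<omega> s \<rho> (\<lambda>u. 1 + f u) 1 (X 1)"
    proof (rule entropy_invariant_constant_along_characteristic[where S = Dom and c = c and Dv = Dv])
      fix \<tau> assume "\<tau> \<in> {1..t}"
      then show "X \<tau> \<noteq> 0 \<and> (X has_vector_derivative v (\<tau>, X \<tau>)) (at \<tau> within {1..t})"
        and "(\<tau>, X \<tau>) \<in> Dom"
        and "((\<lambda>u. 1 + f u) has_real_derivative f0 \<tau>) (at \<tau> within {1..t}) \<and> 1 + f \<tau> > 0"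
        using X t Ival[OF t(2)] fsol_one_plus_pos[OF f hbeta] fsol_one_plus_has_derivative[OF f]
        by (auto simp: Dom_def)
    qed (use t \<rho>_pos \<rho>_C1(1) s_C1(1) cont_eq s_eq in \<open>auto simp: c_def vchk_def case_prod_beta\<close>)
    also have "\<dots> = - (2/3 + \<omega>) * ln A"
      using X t s_init \<rho>_init hd hbeta A(1) f
      by (intro entropy_invariant_initial[where a = "1 + \<beta> * d (norm (X 1))"])
         (auto simp: A_def fsol_def)
    finally show ?thesis using X(1) by simp
  qed
  define P where "P t x = t powr (-4/3) * (\<rho> (t, x) / rho0 t) powr (2/3 + \<omega>)
                            / (1 + f t) powr \<omega> * (norm x)\<^sup>2" for t x
  have "s (t, x) = ln (P t x) \<and> P t x > 0" if tx: "(t, x) \<in> Dom" for t x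
  proof -
    have "t > 0" "x \<noteq> 0" "\<rho> (t, x) > 0" "1 + f t > 0"
      using tx \<rho>_pos Ival fsol_one_plus_pos[OF f hbeta] by (auto simp: Dom_def subset_iff)
    then show ?thesis
      using ln_formula_of_entropy_invariant[OF invariant[OF tx]] A by (auto simp: P_def)
  qed
  then show ?thesis by (auto simp: P_def times_divide_eq_right)
qed

end
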